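(* (a) The integers $n>1$ with exactly one distinct prime divisor satisfying $F_n=D_n$ are exactly the powers $2^k$, $k\ge1$. (b) If $n$ has exactly two distinct prime divisors and $F_n=D_n$, then $n=2^k(2^k+1)^j$ for some positive integers $k,j$ with $2^k+1$ prime.
   Context: For a composite integer $m$, let $d(m)$ denote the largest divisor of $m$ with $1<d(m)<m$. Define $f$ on integers $m>1$ by $f(m)=m-1$ if $m$ is prime and $f(m)=m-d(m)$ if $m$ is composite. Let $f^{(0)}(m)=m$, $f^{(i)}=f\circ f^{(i-1)}$. Define $F_m=\{m,f(m),f^{(2)}(m),\dots,1\}$, the set of iterates of $f$ from $m$ up to and including the first occurrence of $1$, and let $D_m$ be the set of positive divisors of $m$. *)

theory Defs
  imports "HOL-Computational_Algebra.Primes"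
begin

text \<open>Largest divisor d of m with 1 < d < m (meaningful for composite m).\<close>
definition ld :: "nat \<Rightarrow> nat" where
  "ld m = Max {d. d dvd m \<and> 1 < d \<and> d < m}"

text \<open>f(m) = m - 1 if m prime, m - d(m) otherwise (only used for m > 1;
  the value at 0 and 1 is irrelevant for F below).\<close>
definition f :: "nat \<Rightarrow> nat" where
  "f m = (if prime m then m - 1 else m - ld m)"

text \<open>F m: iterates of f from m up to and including the first occurrence of 1.\<close>
definition Fset :: "nat \<Rightarrow> nat set" where
  "Fset m = {(f ^^ i) m | i. \<forall>j<i. (f ^^ j) m \<noteq> 1}"

definition Dset :: "nat \<Rightarrow> nat set" where
  "Dset m = {d. d dvd m}"

end

theory Submission
  imports Defs
begin

text \<open>Halving an even number is a step of \<open>f\<close>, because the largest proper divisor of an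
  even number is its half. Hence the orbit of \<open>2^k\<close> runs through all \<open>2^i\<close>; conversely the first
  step \<open>f n\<close> must divide \<open>n\<close>, which forces \<open>n\<close> to be even. For \<open>n = 2^a q^b\<close> the orbit halves
  down to \<open>q^b\<close> and then reaches \<open>q^(b-1) (q - 1)\<close>; as this divides \<open>n\<close>, \<open>q - 1 = 2^k\<close> with
  \<open>k \<le> a\<close>. From then on the orbit stays among the numbers \<open>2^i q^j\<close> with \<open>j < b\<close> and \<open>i \<le> k\<close>,
  so the divisor \<open>2^a q^(b-1)\<close> lies on it only if \<open>a \<le> k\<close>.\<close>

lemma ld_eqI:
  assumes "d dvd m" "1 < d" "d < m"
    and "\<And>e. e dvd m \<Longrightarrow> 1 < e \<Longrightarrow> e < m \<Longrightarrow> e \<le> d"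
  shows "ld m = d"
  unfolding ld_def
proof (rule Max_eqI)
  show "finite {d. d dvd m \<and> 1 < d \<and> d < m}"
    by (rule finite_subset[of _ "{..<m}"]) auto
qed (use assms in auto)

lemma ld_proper_divisor:
  assumes "m > 1" "\<not> prime m"
  shows "ld m dvd m" "1 < ld m" "ld m < m"
proof -
  let ?S = "{d. d dvd m \<and> 1 < d \<and> d < m}"
  have "finite ?S"
    by (rule finite_subset[of _ "{..<m}"]) auto
  obtain d where "d dvd m" "d \<noteq> 1" "d \<noteq> m"
    using assms prime_nat_iff by auto
  moreover from this assms have "d \<le> m" "d \<noteq> 0"
    by (auto simp: dvd_imp_le)
  ultimately have "d \<in> ?S" by auto
  with \<open>finite ?S\<close> have "ld m \<in> ?S"
    unfolding ld_def by (intro Max_in) auto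
  then show "ld m dvd m" "1 < ld m" "ld m < m" by auto
qed

lemma ld_double:
  assumes "m \<ge> 2"
  shows "ld (2 * m) = m"
proof (rule ld_eqI)
  fix e assume "e dvd 2 * m" "1 < e" "e < 2 * m"
  then obtain c where c: "2 * m = e * c" by blast
  with \<open>e < 2 * m\<close> have "c \<ge> 2"
    by (cases c; cases "c - 1") auto
  then have "e * 2 \<le> e * c" by simp
  with c show "e \<le> m" by linarith
qed (use assms in auto)

lemma ld_prime_power:
  assumes "prime q" "j \<ge> 2"
  shows "ld (q ^ j) = q ^ (j - 1)"
proof (rule ld_eqI)
  have q: "q > 1" using assms prime_gt_1_nat by blast
  have j: "j = Suc (j - 1)" using assms by simp
  show "q ^ (j - 1) dvd q ^ j"
    by (rule le_imp_power_dvd) simp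
  show "1 < q ^ (j - 1)" "q ^ (j - 1) < q ^ j"
    using q assms one_less_power[of q "j - 1"] by (simp_all add: power_strict_increasing_iff)
  fix e assume "e dvd q ^ j" "1 < e" "e < q ^ j"
  then obtain i where "e = q ^ i"
    using divides_primepow_nat[OF assms(1)] by auto
  with \<open>e < q ^ j\<close> q have "i \<le> j - 1"
    by (simp add: power_strict_increasing_iff)
  with \<open>e = q ^ i\<close> q show "e \<le> q ^ (j - 1)"
    by (simp add: power_increasing)
qed

lemma f_double:
  assumes "m \<ge> 1"
  shows "f (2 * m) = m"
proof (cases "m = 1")
  case False
  with assms have "m \<ge> 2" by simp
  then have "\<not> prime (2 * m)"
    using prime_product[of 2 m] by auto
  with ld_double[OF \<open>m \<ge> 2\<close>] show ?thesis
    by (simp add: f_def)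
qed (simp add: f_def)

lemma f_prime_power:
  assumes "prime q" "j \<ge> 1"
  shows "f (q ^ j) = q ^ (j - 1) * (q - 1)"
proof (cases "j = 1")
  case False
  with assms have "j \<ge> 2" by simp
  then have "\<not> prime (q ^ j)"
    by (simp add: prime_power_iff)
  moreover have "q ^ j = q ^ (j - 1) * q"
    using \<open>j \<ge> 2\<close> by (simp flip: power_Suc2)
  ultimately show ?thesis
    using ld_prime_power[OF assms(1) \<open>j \<ge> 2\<close>] by (simp add: f_def diff_mult_distrib2)
qed (simp add: f_def assms)

lemma funpow_f_two_power_mult:
  assumes "m \<ge> 1" "i \<le> a"
  shows "(f ^^ i) (2 ^ a * m) = 2 ^ (a - i) * m"
  using assms(2)
proof (induction i)
  case (Suc i)
  then obtain c where c: "a - i = Suc c" "a - Suc i = c"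
    by (metis Suc_diff_Suc Suc_le_lessD)
  have "(f ^^ Suc i) (2 ^ a * m) = f (2 * (2 ^ c * m))"
    using Suc c by (simp add: mult.assoc)
  also have "\<dots> = 2 ^ (a - Suc i) * m"
    using assms(1) c by (simp add: f_double)
  finally show ?case .
qed simp

lemma f_dvd_imp_even:
  assumes "m > 1" "f m dvd m"
  shows "even m"
proof (cases "prime m")
  case True
  with assms have "m - 1 dvd m"
    by (simp add: f_def)
  then have "m - 1 dvd m - (m - 1)"
    by (rule dvd_diff_nat) simp
  with assms have "m - 1 dvd 1"
    by simp
  with assms have "m = 2"
    by simp
  then show ?thesis by simp
next
  case False
  note d = ld_proper_divisor[OF assms(1) False]
  then obtain c where c: "m = ld m * c" by blast
  with d have "c \<ge> 2"
    by (cases c; cases "c - 1") auto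
  have "f m = ld m * (c - 1)"
    using False c by (simp add: f_def diff_mult_distrib2)
  with assms(2) c have "ld m * (c - 1) dvd ld m * c"
    by simp
  with d have "c - 1 dvd c"
    by (simp add: dvd_mult_cancel_left)
  then have "c - 1 dvd c - (c - 1)"
    by (simp add: dvd_diff_nat)
  with \<open>c \<ge> 2\<close> have "c = 2" by simp
  with c show ?thesis
    by (metis dvd_triv_right)
qed

lemma funpow_in_Fset: "\<forall>j<i. (f ^^ j) n \<noteq> 1 \<Longrightarrow> (f ^^ i) n \<in> Fset n"
  unfolding Fset_def by auto

lemma Fset_subset_if_f_closed:
  assumes "n \<in> S" "\<And>x. x \<in> S \<Longrightarrow> x \<noteq> 1 \<Longrightarrow> f x \<in> S"
  shows "Fset n \<subseteq> S"
proof -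
  have "\<forall>j<i. (f ^^ j) n \<noteq> 1 \<Longrightarrow> (f ^^ i) n \<in> S" for i
    by (induction i) (auto simp: assms)
  then show ?thesis
    unfolding Fset_def by auto
qed

lemma Fset_two_power: "Fset (2 ^ k) = Dset (2 ^ k)"
proof
  have iter: "i \<le> k \<Longrightarrow> (f ^^ i) (2 ^ k) = 2 ^ (k - i)" for i
    using funpow_f_two_power_mult[of 1 i k] by simp
  show "Fset (2 ^ k) \<subseteq> Dset (2 ^ k)"
  proof
    fix x assume "x \<in> Fset (2 ^ k)"
    then obtain i where i: "x = (f ^^ i) (2 ^ k)" "\<forall>j<i. (f ^^ j) (2 ^ k) \<noteq> 1"
      unfolding Fset_def by blast
    have "i \<le> k"
      using i(2) iter[of k] by (metis le_refl not_le_imp_less diff_self_eq_0 power_0)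
    with i show "x \<in> Dset (2 ^ k)"
      unfolding Dset_def by (simp add: iter le_imp_power_dvd)
  qed
  show "Dset (2 ^ k) \<subseteq> Fset (2 ^ k)"
  proof
    fix x assume "x \<in> Dset (2 ^ k)"
    then obtain i where "i \<le> k" "x = 2 ^ i"
      unfolding Dset_def using divides_primepow_nat[of 2] by auto
    moreover have "\<forall>j<k - i. (f ^^ j) (2 ^ k) \<noteq> 1"
      using iter by auto
    ultimately show "x \<in> Fset (2 ^ k)"
      using funpow_in_Fset[of "k - i" "2 ^ k"] iter[of "k - i"] by simp
  qed
qed

lemma Fset_eq_Dset_imp_even:
  assumes "n > 1" "Fset n = Dset n"
  shows "even n"
proof -
  have "(f ^^ 1) n \<in> Fset n"
    using assms by (intro funpow_in_Fset) auto
  with assms have "f n dvd n"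
    unfolding Dset_def by simp
  with assms show ?thesis
    using f_dvd_imp_even by blast
qed

lemma two_power_mult_odd_eq_iff:
  fixes m m' :: nat
  assumes "odd m" "odd m'"
  shows "2 ^ a * m = 2 ^ i * m' \<longleftrightarrow> a = i \<and> m = m'"
proof
  assume eq: "2 ^ a * m = 2 ^ i * m'"
  have "multiplicity 2 (2 ^ e * c) = e" if "odd c" for e and c :: nat
    using that by (subst prime_elem_multiplicity_mult_distrib)
      (auto simp: odd_pos intro!: not_dvd_imp_multiplicity_0)
  with assms eq have "a = i" by metis
  with eq show "a = i \<and> m = m'" by simp
qed simp

lemma Fset_two_power_mult_prime_power_subset:
  assumes "prime q" "q = 2 ^ k + 1"
  shows "Fset (2 ^ a * q ^ b) \<subseteq> {2 ^ i * q ^ j | i j. j = b \<and> i \<le> a \<or> j < b \<and> i \<le> k}"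
    (is "_ \<subseteq> ?S")
proof (rule Fset_subset_if_f_closed)
  show "2 ^ a * q ^ b \<in> ?S" by blast
next
  fix x assume "x \<in> ?S" "x \<noteq> 1"
  then obtain i j where x: "x = 2 ^ i * q ^ j" and ij: "j = b \<and> i \<le> a \<or> j < b \<and> i \<le> k"
    by blast
  show "f x \<in> ?S"
  proof (cases "i = 0")
    case True
    with x \<open>x \<noteq> 1\<close> have "j \<ge> 1" by (cases j) auto
    with True x assms have "f x = 2 ^ k * q ^ (j - 1)"
      by (simp add: f_prime_power mult.commute)
    with \<open>j \<ge> 1\<close> ij show ?thesis by fastforce
  next
    case False
    then have "f x = 2 ^ (i - 1) * q ^ j"
      using x funpow_f_two_power_mult[of "q ^ j" 1 i] assms(2) by simp
    with ij show ?thesis by fastforce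
  qed
qed

lemma Fset_eq_Dset_two_power_mult_prime_power:
  assumes "prime q" "q \<noteq> 2" "b \<ge> 1"
    and F: "Fset (2 ^ a * q ^ b) = Dset (2 ^ a * q ^ b)"
  shows "prime ((2::nat) ^ a + 1) \<and> q = 2 ^ a + 1"
proof -
  let ?n = "2 ^ a * q ^ b"
  have "q > 2" "odd q"
    using assms prime_ge_2_nat prime_odd_nat by (auto simp: le_neq_implies_less)
  then have "q ^ b > 1"
    using \<open>b \<ge> 1\<close> one_less_power[of q b] by simp
  then have "\<forall>j<Suc a. (f ^^ j) ?n \<noteq> 1"
    using funpow_f_two_power_mult[of "q ^ b"] by fastforce
  then have "(f ^^ Suc a) ?n \<in> Dset ?n"
    using F funpow_in_Fset by blast
  moreover have "(f ^^ Suc a) ?n = q ^ (b - 1) * (q - 1)"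
    using funpow_f_two_power_mult[of "q ^ b" a a] \<open>q ^ b > 1\<close> assms f_prime_power by simp
  ultimately have "q - 1 dvd 2 ^ a * q ^ b"
    unfolding Dset_def using dvd_mult_right by fastforce
  moreover have "coprime (q - 1) (q ^ b)"
    using coprime_diff_one_left_nat[of q] \<open>q > 2\<close> by simp
  ultimately have "q - 1 dvd 2 ^ a"
    using coprime_dvd_mult_left_iff by blast
  then obtain k where "k \<le> a" "q - 1 = 2 ^ k"
    using divides_primepow_nat[of 2] by auto
  with \<open>q > 2\<close> have k: "q = 2 ^ k + 1"
    by simp
  have "2 ^ a * q ^ (b - 1) \<in> Dset ?n"
    unfolding Dset_def using \<open>b \<ge> 1\<close> by (simp add: le_imp_power_dvd)
  then obtain i j where "2 ^ a * q ^ (b - 1) = 2 ^ i * q ^ j" "j = b \<and> i \<le> a \<or> j < b \<and> i \<le> k"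
    using F Fset_two_power_mult_prime_power_subset[OF \<open>prime q\<close> k] by blast
  with \<open>odd q\<close> \<open>q > 2\<close> \<open>b \<ge> 1\<close> have "a \<le> k"
    by (auto simp: two_power_mult_odd_eq_iff)
  with \<open>k \<le> a\<close> k \<open>prime q\<close> show ?thesis by simp
qed

lemma one_prime_factor_Fset_eq_Dset_iff:
  assumes "n > 1" "card (prime_factors n) = 1"
  shows "Fset n = Dset n \<longleftrightarrow> (\<exists>k\<ge>1. n = 2 ^ k)"
proof
  obtain p where P: "prime_factors n = {p}"
    using assms card_1_singletonE by blast
  then have n: "n = p ^ multiplicity p n"
    using prime_factorization_nat[of n] assms by simp
  assume "Fset n = Dset n"
  with assms have "2 \<in> prime_factors n"
    using Fset_eq_Dset_imp_even by (simp add: in_prime_factors_iff)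
  with P n assms show "\<exists>k\<ge>1. n = 2 ^ k"
    by (metis One_nat_def Suc_leI gr0I less_not_refl2 power_0 singletonD)
qed (auto simp: Fset_two_power)

lemma two_prime_factors_Fset_eq_Dset:
  assumes "n > 1" "card (prime_factors n) = 2" "Fset n = Dset n"
  shows "\<exists>k j. k > 0 \<and> j > 0 \<and> prime ((2::nat) ^ k + 1) \<and> n = 2 ^ k * (2 ^ k + 1) ^ j"
proof -
  have "2 \<in> prime_factors n"
    using assms Fset_eq_Dset_imp_even by (simp add: in_prime_factors_iff)
  with assms(2) obtain q where Q: "prime_factors n = {2, q}" "q \<noteq> 2"
    by (auto simp: card_2_iff doubleton_eq_iff)
  then have "prime q" "q dvd n"
    by (auto simp: in_prime_factors_iff)
  have n: "n = 2 ^ multiplicity 2 n * q ^ multiplicity q n"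
    using prime_factorization_nat[of n] assms Q by simp
  have "multiplicity 2 n \<ge> 1" "multiplicity q n \<ge> 1"
    using \<open>2 \<in> prime_factors n\<close> \<open>q dvd n\<close> \<open>prime q\<close> assms(1)
    by (auto simp: Suc_le_eq prime_multiplicity_gt_zero_iff in_prime_factors_iff)
  with Fset_eq_Dset_two_power_mult_prime_power[OF \<open>prime q\<close> \<open>q \<noteq> 2\<close>] assms(3) n
  show ?thesis
    by (metis One_nat_def Suc_le_eq)
qed

theorem mainTheorem10:
  shows "(\<forall>n::nat. n > 1 \<and> card (prime_factors n) = 1 \<longrightarrow>
            (Fset n = Dset n \<longleftrightarrow> (\<exists>k\<ge>1. n = 2 ^ k)))
       \<and> (\<forall>n::nat. n > 1 \<and> card (prime_factors n) = 2 \<and> Fset n = Dset n \<longrightarrow>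
            (\<exists>k j. k > 0 \<and> j > 0 \<and> prime ((2::nat) ^ k + 1) \<and> n = 2 ^ k * (2 ^ k + 1) ^ j))"
  using one_prime_factor_Fset_eq_Dset_iff two_prime_factors_Fset_eq_Dset by blast

end
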